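(* Let $\xi_1,\xi_2,\dots$ be an IID sequence of Bernoulli random variables with probability of success $p\in[0,1]$, and let $\hat p_n:=\frac1n\sum_{i=1}^n\xi_i$. For each $\delta>0$ and $n\ge1$ let \[ I_n:=\Bigl\{p'\in[0,1]:\ |p'-\hat p_{\lfloor\!\lfloor n\rfloor\!\rfloor}|<\sqrt{\frac{2\ln\log_2\lfloor\!\lfloor n\rfloor\!\rfloor+\ln\frac{3.3}{\delta}}{2\lfloor\!\lfloor n\rfloor\!\rfloor}}\Bigr\}, \] with the convention $\ln\log_2 1:=\infty$ (so $I_1=[0,1]$). Then $\mathbb{P}(\forall n\ge1:\ p\in I_n)\ge1-\delta$.
   Context: For an integer $n\ge2$, $\lfloor\!\lfloor n\rfloor\!\rfloor$ denotes the largest integer of the form $2^k$, $k\in\{1,2,\dots\}$, with $2^k\le n$; for $n<2$, $\lfloor\!\lfloor n\rfloor\!\rfloor:=1$. $\log_2$ is the binary logarithm. *)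

theory Defs
  imports "HOL-Probability.Probability"
begin

definition pow2floor :: "nat \<Rightarrow> nat" where
  "pow2floor n = (if n < 2 then 1 else (GREATEST m. (\<exists>k\<ge>1. m = 2 ^ k) \<and> m \<le> n))"

definition phat :: "(nat \<Rightarrow> 'a \<Rightarrow> real) \<Rightarrow> nat \<Rightarrow> 'a \<Rightarrow> real" where
  "phat \<xi> n \<omega> = (\<Sum>i=1..n. \<xi> i \<omega>) / real n"

text \<open>Membership of p' in I_n(omega). For pow2floor n = 1 the radius is infinite
  (convention ln log_2 1 = infinity), so I_n = [0,1].\<close>
definition in_I :: "(nat \<Rightarrow> 'a \<Rightarrow> real) \<Rightarrow> real \<Rightarrow> nat \<Rightarrow> real \<Rightarrow> 'a \<Rightarrow> bool" where
  "in_I \<xi> \<delta> n p' \<omega> \<longleftrightarrow> p' \<in> {0..1} \<and>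
     (let m = pow2floor n in
        m = 1 \<or>
        \<bar>p' - phat \<xi> m \<omega>\<bar> <
          sqrt ((2 * ln (log 2 (real m)) + ln (3.3 / \<delta>)) / (2 * real m)))"

end

(* Only the empirical means at the dyadic times 2^k matter. By Hoeffding's inequality the mean at
   time 2^k leaves the radius sqrt ((2 ln k + ln c) / (2 * 2^k)) around p with probability at most
   2 exp (-(2 ln k + ln c)) = 2 / (c k^2). With c = 3.3 / delta the union bound over k >= 1 gives
   failure probability at most pi^2 delta / 9.9 <= delta. *)

theory Submission
  imports Defs "HOL-Probability.Hoeffding"
begin

lemma pow2floor_eq_power:
  assumes "n \<ge> 2"
  shows "\<exists>k\<ge>1. pow2floor n = 2 ^ k"
proof -
  let ?P = "\<lambda>m. (\<exists>k\<ge>1. m = (2::nat) ^ k) \<and> m \<le> n"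
  have "?P (Greatest ?P)"
    by (rule GreatestI_nat[of _ 2 n]) (use assms in \<open>auto intro: exI[of _ 1]\<close>)
  then show ?thesis
    using assms unfolding pow2floor_def by auto
qed

definition confidence_radius :: "real \<Rightarrow> nat \<Rightarrow> real" where
  "confidence_radius c k = sqrt ((2 * ln (real k) + ln c) / (2 * 2 ^ k))"

lemma in_I_if_dyadic_deviations_small:
  assumes "p \<in> {0..1}"
    and "\<And>k. k \<ge> 1 \<Longrightarrow>
           \<bar>p - phat \<xi> (2 ^ k) \<omega>\<bar> < confidence_radius (3.3 / \<delta>) k"
  shows "in_I \<xi> \<delta> n p \<omega>"
proof (cases "n < 2")
  case True
  then show ?thesis
    using assms(1) by (simp add: in_I_def pow2floor_def)
next
  case False
  then obtain k where "k \<ge> 1" and k: "pow2floor n = 2 ^ k"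
    using pow2floor_eq_power[of n] by auto
  moreover have "log 2 (2 ^ k) = real k"
    by (simp add: log_nat_power)
  ultimately show ?thesis
    using assms by (simp add: in_I_def Let_def confidence_radius_def)
qed

lemma (in prob_space) expectation_zero_one_valued:
  assumes X: "X \<in> borel_measurable M" and "AE \<omega> in M. X \<omega> \<in> {0, 1}"
  shows "expectation X = prob {\<omega> \<in> space M. X \<omega> = 1}"
proof -
  have "{\<omega> \<in> space M. X \<omega> = 1} \<in> events"
    using X by measurable
  then have "expectation X = expectation (indicator {\<omega> \<in> space M. X \<omega> = 1})"
    using X assms(2) by (intro integral_cong_AE)
      (auto elim!: eventually_mono simp: indicator_def intro: borel_measurable_indicator)
  also have "\<dots> = prob {\<omega> \<in> space M. X \<omega> = 1}"
    using X by simp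
  finally show ?thesis .
qed

lemma (in prob_space) prob_phat_deviation_ge:
  assumes indep: "indep_vars (\<lambda>_. borel) \<xi> {1..m}"
    and meas: "\<And>i. i \<in> {1..m} \<Longrightarrow> \<xi> i \<in> borel_measurable M"
    and zero_one: "\<And>i. i \<in> {1..m} \<Longrightarrow> AE \<omega> in M. \<xi> i \<omega> \<in> {0, 1}"
    and success: "\<And>i. i \<in> {1..m} \<Longrightarrow> prob {\<omega> \<in> space M. \<xi> i \<omega> = 1} = p"
    and "m \<ge> 1" and "\<epsilon> \<ge> 0"
  shows "prob {\<omega> \<in> space M. \<epsilon> \<le> \<bar>p - phat \<xi> m \<omega>\<bar>} \<le> 2 * exp (-2 * real m * \<epsilon>\<^sup>2)"
proof -
  interpret Hoeffding_ineq M "{1..m}" \<xi> "\<lambda>_. 0" "\<lambda>_. 1" "\<Sum>i\<in>{1..m}. expectation (\<xi> i)"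
  proof unfold_locales
    fix i assume "i \<in> {1..m}"
    then show "AE \<omega> in M. \<xi> i \<omega> \<in> {0..1}"
      using zero_one[of i] by (auto elim!: eventually_mono)
  qed (use indep in auto)
  have "expectation (\<xi> i) = p" if "i \<in> {1..m}" for i
    using meas[OF that] zero_one[OF that] success[OF that] by (simp add: expectation_zero_one_valued)
  then have mean: "(\<Sum>i\<in>{1..m}. expectation (\<xi> i)) = real m * p"
    by simp
  have "p - phat \<xi> m \<omega> = (real m * p - (\<Sum>i\<in>{1..m}. \<xi> i \<omega>)) / real m" for \<omega>
    using \<open>m \<ge> 1\<close> by (simp add: phat_def diff_divide_distrib)
  then have "\<bar>p - phat \<xi> m \<omega>\<bar> = \<bar>(\<Sum>i\<in>{1..m}. \<xi> i \<omega>) - real m * p\<bar> / real m" for \<omega>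
    by (simp add: abs_divide abs_minus_commute)
  then have "{\<omega> \<in> space M. \<epsilon> \<le> \<bar>p - phat \<xi> m \<omega>\<bar>}
      = {\<omega> \<in> space M. real m * \<epsilon> \<le> \<bar>(\<Sum>i\<in>{1..m}. \<xi> i \<omega>) - real m * p\<bar>}"
    using \<open>m \<ge> 1\<close> by (simp add: pos_le_divide_eq mult.commute)
  also have "prob \<dots> \<le> 2 * exp (-2 * (real m * \<epsilon>)\<^sup>2 / real m)"
    using Hoeffding_ineq_abs_ge[of "real m * \<epsilon>"] \<open>m \<ge> 1\<close> \<open>\<epsilon> \<ge> 0\<close> mean by simp
  also have "-2 * (real m * \<epsilon>)\<^sup>2 / real m = -2 * real m * \<epsilon>\<^sup>2"
    using \<open>m \<ge> 1\<close> by (simp add: power2_eq_square)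
  finally show ?thesis .
qed

lemma (in prob_space) prob_Union_le_sums:
  assumes "\<And>i. A i \<in> events" and "\<And>i. prob (A i) \<le> f i" and "f sums s"
  shows "prob (\<Union>i. A i) \<le> s"
proof -
  have summable_f: "summable f"
    using assms(3) by (rule sums_summable)
  have summable: "summable (\<lambda>i. prob (A i))"
    by (rule summable_comparison_test'[OF summable_f, of 0]) (use assms(2) in simp)
  have "prob (\<Union>i. A i) \<le> (\<Sum>i. prob (A i))"
    using assms(1) summable by (intro finite_measure_subadditive_countably) auto
  also have "\<dots> \<le> s"
    using suminf_le[OF assms(2) summable summable_f] sums_unique[OF assms(3)] by simp
  finally show ?thesis .
qed

lemma pi_squared_le: "pi\<^sup>2 \<le> 9.9"
proof -
  have "pi\<^sup>2 \<le> 3.1416\<^sup>2"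
    using pi_approx(2) pi_gt_zero by (intro power_mono) auto
  also have "(3.1416::real)\<^sup>2 \<le> 9.9"
    by (simp add: power2_eq_square)
  finally show ?thesis .
qed

locale bernoulli_process = prob_space +
  fixes \<xi> :: "nat \<Rightarrow> 'a \<Rightarrow> real" and p :: real
  assumes indep: "indep_vars (\<lambda>_. borel) \<xi> {1..}"
    and measurable: "\<And>i. i \<ge> 1 \<Longrightarrow> \<xi> i \<in> borel_measurable M"
    and zero_one: "\<And>i. i \<ge> 1 \<Longrightarrow> AE \<omega> in M. \<xi> i \<omega> \<in> {0, 1}"
    and success: "\<And>i. i \<ge> 1 \<Longrightarrow> prob {\<omega> \<in> space M. \<xi> i \<omega> = 1} = p"
begin

lemma borel_measurable_phat [measurable]: "phat \<xi> m \<in> borel_measurable M"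
  unfolding phat_def using measurable by measurable

lemma prob_confidence_radius_le:
  assumes "c \<ge> 1" and "k \<ge> 1"
  shows "prob {\<omega> \<in> space M. confidence_radius c k \<le> \<bar>p - phat \<xi> (2 ^ k) \<omega>\<bar>}
           \<le> 2 / (c * (real k)\<^sup>2)"
proof -
  let ?r = "2 * ln (real k) + ln c"
  have r_nonneg: "?r \<ge> 0"
    using assms by simp
  have r_eq: "?r = ln (c * (real k)\<^sup>2)"
    using assms by (simp add: ln_mult ln_realpow)
  have "prob {\<omega> \<in> space M. confidence_radius c k \<le> \<bar>p - phat \<xi> (2 ^ k) \<omega>\<bar>}
      \<le> 2 * exp (-2 * real (2 ^ k) * (confidence_radius c k)\<^sup>2)"
    using indep measurable zero_one success r_nonneg
    by (intro prob_phat_deviation_ge) (auto simp: confidence_radius_def intro: indep_vars_subset)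
  also have "-2 * real (2 ^ k) * (confidence_radius c k)\<^sup>2 = - ln (c * (real k)\<^sup>2)"
    using r_nonneg r_eq by (simp add: confidence_radius_def)
  also have "2 * exp (- ln (c * (real k)\<^sup>2)) = 2 / (c * (real k)\<^sup>2)"
    using assms by (simp add: exp_minus inverse_eq_divide)
  finally show ?thesis .
qed

lemma prob_dyadic_deviation_le:
  assumes "c \<ge> 1"
  shows "prob (\<Union>i. {\<omega> \<in> space M.
           confidence_radius c (Suc i) \<le> \<bar>p - phat \<xi> (2 ^ Suc i) \<omega>\<bar>}) \<le> pi\<^sup>2 / (3 * c)"
proof -
  have bound: "prob {\<omega> \<in> space M. confidence_radius c (Suc i) \<le> \<bar>p - phat \<xi> (2 ^ Suc i) \<omega>\<bar>}
      \<le> 2 / c * (1 / real ((i + 1)\<^sup>2))" for i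
    using prob_confidence_radius_le[OF assms, of "Suc i"] by simp
  have "prob (\<Union>i. {\<omega> \<in> space M.
      confidence_radius c (Suc i) \<le> \<bar>p - phat \<xi> (2 ^ Suc i) \<omega>\<bar>}) \<le> 2 / c * (pi\<^sup>2 / 6)"
    by (rule prob_Union_le_sums[OF _ bound sums_mult[OF inverse_squares_sums]]) measurable
  then show ?thesis
    by simp
qed

end

theorem proposition2:
  fixes M :: "'a measure" and \<xi> :: "nat \<Rightarrow> 'a \<Rightarrow> real" and p \<delta> :: real
  assumes "prob_space M"
    and "p \<in> {0..1}"
    and "\<delta> > 0"
    and "prob_space.indep_vars M (\<lambda>_. borel) \<xi> {1..}"
    and "\<And>i. i \<ge> 1 \<Longrightarrow> \<xi> i \<in> borel_measurable M"
    and "\<And>i. i \<ge> 1 \<Longrightarrow> AE \<omega> in M. \<xi> i \<omega> \<in> {0, 1}"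
    and "\<And>i. i \<ge> 1 \<Longrightarrow> measure M {\<omega> \<in> space M. \<xi> i \<omega> = 1} = p"
  shows "measure M {\<omega> \<in> space M. \<forall>n\<ge>1. in_I \<xi> \<delta> n p \<omega>} \<ge> 1 - \<delta>"
proof (cases "\<delta> < 1")
  case False
  then show ?thesis
    by (simp add: order_trans[OF _ measure_nonneg])
next
  case True
  interpret bernoulli_process M \<xi> p
    using assms(1,4-7) by (simp add: bernoulli_process_def bernoulli_process_axioms_def)
  define c where "c = 3.3 / \<delta>"
  define A where
    "A i = {\<omega> \<in> space M. confidence_radius c (Suc i) \<le> \<bar>p - phat \<xi> (2 ^ Suc i) \<omega>\<bar>}" for i
  define G where "G = {\<omega> \<in> space M. \<forall>n\<ge>1. in_I \<xi> \<delta> n p \<omega>}"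
  have "c \<ge> 1"
    using True \<open>\<delta> > 0\<close> by (simp add: c_def)
  have "space M - (\<Union>i. A i) \<subseteq> G"
    using assms(2) unfolding A_def G_def c_def
    by (auto intro!: in_I_if_dyadic_deviations_small simp: not_le dest!: Suc_le_D)
  moreover have "(\<Union>i. A i) \<in> events" and "G \<in> events"
    unfolding A_def G_def in_I_def Let_def by measurable
  moreover have "prob (\<Union>i. A i) \<le> pi\<^sup>2 / (3 * c)"
    unfolding A_def using \<open>c \<ge> 1\<close> by (rule prob_dyadic_deviation_le)
  moreover have "pi\<^sup>2 / (3 * c) \<le> \<delta>"
    using pi_squared_le \<open>\<delta> > 0\<close> by (simp add: c_def field_simps)
  ultimately have "1 - \<delta> \<le> prob G"
    using prob_compl[of "\<Union>i. A i"] finite_measure_mono[of "space M - (\<Union>i. A i)" G] by simp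
  then show ?thesis
    unfolding G_def .
qed

end
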